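(* For every integer $k\ge0$ and every $\mathbf q\in C^{k+1}[-1,1]\times C^k[-1,1]$, $$\operatorname{Re}\langle\tilde{\mathbf L}\mathbf q,\mathbf q\rangle_k\le-\tfrac12\|\mathbf q\|_k^2 .$$
   Context: $\tilde{\mathbf L}\mathbf q=\big(-y\partial_yq_1+q_2-q_1(-1),\ \partial_y^2q_1-q_2-y\partial_yq_2\big)$, where $q_1(-1)$ denotes the constant function with that value. For $\mathbf q,\tilde{\mathbf q}$ sufficiently smooth: $\langle\mathbf q,\tilde{\mathbf q}\rangle_0=\int_{-1}^1\partial_yq_1\overline{\partial_y\tilde q_1}\,dy+\int_{-1}^1q_2\overline{\tilde q_2}\,dy+q_1(-1)\overline{\tilde q_1(-1)}$, and for $k\ge1$: $\langle\mathbf q,\tilde{\mathbf q}\rangle_k=\int_{-1}^1\partial_y^{k+1}q_1\overline{\partial_y^{k+1}\tilde q_1}\,dy+\int_{-1}^1\partial_y^kq_2\overline{\partial_y^k\tilde q_2}\,dy+\langle\mathbf q,\tilde{\mathbf q}\rangle_0$; $\|\mathbf q\|_k^2=\langle\mathbf q,\mathbf q\rangle_k$. *)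

theory Defs
  imports "HOL-Analysis.Analysis"
begin

text \<open>Functions on [-1,1] are complex valued functions of a real variable.
  Derivatives are taken within the closed interval [-1,1] (one-sided at the endpoints).\<close>

type_synonym cfun = "real \<Rightarrow> complex"

fun Dn :: "nat \<Rightarrow> cfun \<Rightarrow> cfun" where
  "Dn 0 f = f"
| "Dn (Suc n) f = (\<lambda>x. vector_derivative (Dn n f) (at x within {-1..1}))"

definition Cn :: "nat \<Rightarrow> cfun \<Rightarrow> bool" where
  "Cn n f \<longleftrightarrow>
     (\<forall>j\<le>n. continuous_on {-1..1} (Dn j f)) \<and>
     (\<forall>j<n. \<forall>x\<in>{-1..1}. (Dn j f has_vector_derivative Dn (Suc j) f x) (at x within {-1..1}))"

definition Ltilde :: "cfun \<times> cfun \<Rightarrow> cfun \<times> cfun" where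
  "Ltilde q = (let q1 = fst q; q2 = snd q in
     (\<lambda>y. - complex_of_real y * Dn 1 q1 y + q2 y - q1 (-1),
      \<lambda>y. Dn 2 q1 y - q2 y - complex_of_real y * Dn 1 q2 y))"

definition ip0 :: "cfun \<times> cfun \<Rightarrow> cfun \<times> cfun \<Rightarrow> complex" where
  "ip0 q p = integral {-1..1} (\<lambda>y. Dn 1 (fst q) y * cnj (Dn 1 (fst p) y))
           + integral {-1..1} (\<lambda>y. snd q y * cnj (snd p y))
           + fst q (-1) * cnj (fst p (-1))"

definition ipk :: "nat \<Rightarrow> cfun \<times> cfun \<Rightarrow> cfun \<times> cfun \<Rightarrow> complex" where
  "ipk k q p = (if k = 0 then ip0 q p else
       integral {-1..1} (\<lambda>y. Dn (k+1) (fst q) y * cnj (Dn (k+1) (fst p) y))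
     + integral {-1..1} (\<lambda>y. Dn k (snd q) y * cnj (Dn k (snd p) y))
     + ip0 q p)"

definition normk_sq :: "nat \<Rightarrow> cfun \<times> cfun \<Rightarrow> real" where
  "normk_sq k q = Re (ipk k q q)"

end

theory Submission
  imports Defs
begin

(* With u = q1^(j+1) and v = q2^(j), differentiating shows that the level-j components of
   L~q are  -y u' - (j+1) u + v'  and  u' - (j+1) v - y v'.  Integrating the transport term
   y d/dy by parts, the top-order part of 2 Re <L~q, q>_j + |q|_j^2 equals
   -2j (|u|^2 + |v|^2) - |u(1) - v(1)|^2 - |u(-1) + v(-1)|^2 <= 0.
   At level 0 the constant -q1(-1) in the first component of L~q meets the boundary term
   q1(-1) conj (q1(-1)) of <.,.>_0, and the two boundary contributions at -1 combine into
   -|u(-1) + v(-1) - q1(-1)|^2. *)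

declare Dn.simps(2) [simp del]

lemma Cn_has_vector_derivative:
  "Cn n f \<Longrightarrow> j < n \<Longrightarrow> x \<in> {-1..1} \<Longrightarrow>
    (Dn j f has_vector_derivative Dn (Suc j) f x) (at x within {-1..1})"
  unfolding Cn_def by blast

lemma Cn_continuous_on: "Cn n f \<Longrightarrow> j \<le> n \<Longrightarrow> continuous_on {-1..1} (Dn j f)"
  unfolding Cn_def by blast

lemma Cn_mono: "Cn n f \<Longrightarrow> m \<le> n \<Longrightarrow> Cn m f"
  unfolding Cn_def by auto

lemma Dn_eq_derivative_chain:
  assumes F0: "\<forall>x\<in>{-1..1}. F 0 x = f x"
    and FD: "\<forall>j<n. \<forall>x\<in>{-1..1}. (F j has_vector_derivative F (Suc j) x) (at x within {-1..1})"
    and "j \<le> n" "x \<in> {-1..1}"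
  shows "Dn j f x = F j x"
  using assms(3,4)
proof (induction j arbitrary: x)
  case 0
  then show ?case using F0 by simp
next
  case (Suc j)
  have "(Dn j f has_vector_derivative F (Suc j) x) (at x within {-1..1})"
    by (rule has_vector_derivative_transform[OF Suc.prems(2) _ FD[rule_format]])
      (use Suc in auto)
  then show ?case
    using vector_derivative_within_closed_interval[of "-1" 1 x "Dn j f"] Suc.prems
    by (simp add: Dn.simps(2))
qed

lemma Dn_fst_Ltilde:
  assumes q1: "Cn (n+1) q1" and q2: "Cn n q2" and j: "1 \<le> j" "j \<le> n" and x: "x \<in> {-1..1}"
  shows "Dn j (fst (Ltilde (q1, q2))) x
    = - of_real x * Dn (j+1) q1 x - of_nat j * Dn j q1 x + Dn j q2 x"
proof -
  define F where "F i = (case i of 0 \<Rightarrow> fst (Ltilde (q1, q2)) | Suc _ \<Rightarrow>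
    (\<lambda>y. - of_real y * Dn (i+1) q1 y - of_nat i * Dn i q1 y + Dn i q2 y))" for i
  have "(F i has_vector_derivative F (Suc i) y) (at y within {-1..1})"
    if "i < n" "y \<in> {-1..1}" for i y
  proof (cases i)
    case 0
    have "(Dn 1 q1 has_vector_derivative Dn 2 q1 y) (at y within {-1..1})"
      using Cn_has_vector_derivative[OF q1, of 1 y] that 0 by (simp add: numeral_2_eq_2)
    moreover have "(q2 has_vector_derivative Dn 1 q2 y) (at y within {-1..1})"
      using Cn_has_vector_derivative[OF q2, of 0 y] that 0 by simp
    ultimately show ?thesis
      unfolding F_def 0 Ltilde_def
      by (auto intro!: derivative_eq_intros simp: algebra_simps numeral_2_eq_2)
  next
    case (Suc i')
    show ?thesis
      unfolding F_def Suc
      using that Suc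
      by (auto intro!: derivative_eq_intros Cn_has_vector_derivative[OF q1]
          Cn_has_vector_derivative[OF q2] simp: algebra_simps)
  qed
  then have "Dn j (fst (Ltilde (q1, q2))) x = F j x"
    by (intro Dn_eq_derivative_chain[of F _ n] j x) (simp_all add: F_def)
  then show ?thesis
    using j by (simp add: F_def split: nat.split)
qed

lemma Dn_snd_Ltilde:
  assumes q1: "Cn (n+2) q1" and q2: "Cn (n+1) q2" and j: "j \<le> n" and x: "x \<in> {-1..1}"
  shows "Dn j (snd (Ltilde (q1, q2))) x
    = Dn (j+2) q1 x - of_nat (j+1) * Dn j q2 x - of_real x * Dn (j+1) q2 x"
proof -
  define G where "G i y = Dn (i+2) q1 y - of_nat (i+1) * Dn i q2 y - of_real y * Dn (i+1) q2 y"
    for i y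
  have "(G i has_vector_derivative G (Suc i) y) (at y within {-1..1})"
    if "i < n" "y \<in> {-1..1}" for i y
    unfolding G_def
    using that
    by (auto intro!: derivative_eq_intros Cn_has_vector_derivative[OF q1] Cn_has_vector_derivative[OF q2]
        simp: algebra_simps)
  then have "Dn j (snd (Ltilde (q1, q2))) x = G j x"
    by (intro Dn_eq_derivative_chain[of G _ n] j x)
      (simp_all add: G_def Ltilde_def numeral_2_eq_2 Dn.simps(2))
  then show ?thesis
    by (simp add: G_def)
qed

definition L2ip :: "cfun \<Rightarrow> cfun \<Rightarrow> complex" where
  "L2ip f g = integral {-1..1} (\<lambda>y. f y * cnj (g y))"

lemma has_integral_L2ip:
  "continuous_on {-1..1} f \<Longrightarrow> continuous_on {-1..1} g \<Longrightarrow>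
    ((\<lambda>y. f y * cnj (g y)) has_integral L2ip f g) {-1..1}"
  unfolding L2ip_def
  by (intro integrable_integral integrable_continuous_interval continuous_intros)

lemma L2ip_cong:
  "(\<And>x. x \<in> {-1..1} \<Longrightarrow> f x = f' x) \<Longrightarrow> (\<And>x. x \<in> {-1..1} \<Longrightarrow> g x = g' x) \<Longrightarrow>
    L2ip f g = L2ip f' g'"
  unfolding L2ip_def by (rule integral_cong) simp

lemma Re_L2ip_self_nonneg:
  assumes "continuous_on {-1..1} f"
  shows "0 \<le> Re (L2ip f f)"
proof -
  have "((\<lambda>y. Re (f y * cnj (f y))) has_integral Re (L2ip f f)) {-1..1}"
    using has_integral_linear[OF has_integral_L2ip[OF assms assms] bounded_linear_Re]
    by (simp add: o_def)
  then show ?thesis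
    by (rule has_integral_nonneg) (simp flip: complex_norm_square)
qed

(* With A, B the integrands paired with u and v on the left, pointwise
   2 Re (A conj u + B conj v) + |u|^2 + |v|^2 = -2 (m - 1) (|u|^2 + |v|^2) - R'
   for R = y (|u|^2 + |v|^2) - 2 Re (v conj u), and R' integrates to boundary values. *)
lemma transport_energy_identity:
  fixes u v u' v' :: cfun and m :: real
  assumes du: "\<And>x. x \<in> {-1..1} \<Longrightarrow> (u has_vector_derivative u' x) (at x within {-1..1})"
    and dv: "\<And>x. x \<in> {-1..1} \<Longrightarrow> (v has_vector_derivative v' x) (at x within {-1..1})"
    and cu': "continuous_on {-1..1} u'" and cv': "continuous_on {-1..1} v'"
  shows "2 * Re (L2ip (\<lambda>y. - of_real y * u' y - of_real m * u y + v' y) u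
                 + L2ip (\<lambda>y. u' y - of_real m * v y - of_real y * v' y) v)
           + Re (L2ip u u + L2ip v v)
         = - 2 * (m - 1) * Re (L2ip u u + L2ip v v)
           - (cmod (u 1 - v 1))\<^sup>2 - (cmod (u (-1) + v (-1)))\<^sup>2"
proof -
  let ?I = "{-1..1::real}"
  define A where "A = (\<lambda>y. - of_real y * u' y - of_real m * u y + v' y)"
  define B where "B = (\<lambda>y. u' y - of_real m * v y - of_real y * v' y)"
  define YA where "YA = L2ip A u"
  define YB where "YB = L2ip B v"
  define N where "N = L2ip u u + L2ip v v"
  have cu: "continuous_on ?I u" using du by (rule continuous_on_vector_derivative)
  have cv: "continuous_on ?I v" using dv by (rule continuous_on_vector_derivative)
  have cA: "continuous_on ?I A" unfolding A_def by (intro continuous_intros cu cv cu' cv')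
  have cB: "continuous_on ?I B" unfolding B_def by (intro continuous_intros cu cv cu' cv')
  define R where "R y = of_real y * (u y * cnj (u y) + v y * cnj (v y))
    - (v y * cnj (u y) + u y * cnj (v y))" for y
  define R' where "R' y = (u y * cnj (u y) + v y * cnj (v y))
    + of_real y * (u y * cnj (u' y) + u' y * cnj (u y) + (v y * cnj (v' y) + v' y * cnj (v y)))
    - (v y * cnj (u' y) + v' y * cnj (u y) + (u y * cnj (v' y) + u' y * cnj (v y)))" for y
  have "(R has_vector_derivative R' x) (at x within ?I)" if "x \<in> ?I" for x
    unfolding R_def[abs_def] R'_def
    by (rule derivative_eq_intros du[OF that] dv[OF that] refl | simp)+
  then have hR: "(R' has_integral (R 1 - R (-1))) ?I"
    by (intro fundamental_theorem_of_calculus) auto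
  have "((\<lambda>y. A y * cnj (u y) + B y * cnj (v y) + (cnj (A y * cnj (u y)) + cnj (B y * cnj (v y)))
       + (u y * cnj (u y) + v y * cnj (v y))) has_integral (YA + YB + (cnj YA + cnj YB) + N)) ?I"
    unfolding YA_def YB_def N_def
    using has_integral_cnj[THEN iffD2, OF has_integral_L2ip[OF cA cu]]
      has_integral_cnj[THEN iffD2, OF has_integral_L2ip[OF cB cv]]
    by (intro has_integral_add has_integral_L2ip cA cB cu cv) (auto simp: o_def)
  moreover have "((\<lambda>y. A y * cnj (u y) + B y * cnj (v y) + (cnj (A y * cnj (u y)) + cnj (B y * cnj (v y)))
       + (u y * cnj (u y) + v y * cnj (v y))) has_integral (- 2 * of_real (m - 1) * N - (R 1 - R (-1)))) ?I"
  proof (rule has_integral_eq)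
    show "((\<lambda>y. - 2 * of_real (m - 1) * (u y * cnj (u y) + v y * cnj (v y)) - R' y)
        has_integral (- 2 * of_real (m - 1) * N - (R 1 - R (-1)))) ?I"
      unfolding N_def
      by (intro has_integral_diff has_integral_mult_right has_integral_add has_integral_L2ip cu cv hR)
  qed (simp add: A_def B_def R'_def algebra_simps)
  ultimately have "YA + YB + (cnj YA + cnj YB) + N = - 2 * of_real (m - 1) * N - (R 1 - R (-1))"
    by (rule has_integral_unique)
  moreover have "R 1 - R (-1) = (u 1 - v 1) * cnj (u 1 - v 1) + (u (-1) + v (-1)) * cnj (u (-1) + v (-1))"
    by (simp add: R_def algebra_simps)
  ultimately have "2 * Re (YA + YB) + Re N
      = - 2 * (m - 1) * Re N - (cmod (u 1 - v 1))\<^sup>2 - (cmod (u (-1) + v (-1)))\<^sup>2"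
    unfolding complex_norm_square[symmetric] by (auto dest: arg_cong[of _ _ Re])
  then show ?thesis
    by (simp only: YA_def YB_def N_def A_def B_def)
qed

definition ip_hom :: "nat \<Rightarrow> cfun \<times> cfun \<Rightarrow> cfun \<times> cfun \<Rightarrow> complex" where
  "ip_hom j q p = L2ip (Dn (j+1) (fst q)) (Dn (j+1) (fst p)) + L2ip (Dn j (snd q)) (Dn j (snd p))"

lemma ip0_eq_ip_hom: "ip0 q p = ip_hom 0 q p + fst q (-1) * cnj (fst p (-1))"
  by (simp add: ip0_def ip_hom_def L2ip_def)

lemma ipk_eq_ip_hom: "k \<noteq> 0 \<Longrightarrow> ipk k q p = ip_hom k q p + ip0 q p"
  by (simp add: ipk_def ip_hom_def L2ip_def)

lemma Re_ip_hom_self_nonneg: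
  "Cn (j+1) q1 \<Longrightarrow> Cn j q2 \<Longrightarrow> 0 \<le> Re (ip_hom j (q1, q2) (q1, q2))"
  unfolding ip_hom_def
  by (simp add: add_nonneg_nonneg Re_L2ip_self_nonneg Cn_continuous_on)

lemma Re_ip_hom_Ltilde:
  assumes q1: "Cn (j+2) q1" and q2: "Cn (j+1) q2"
  shows "2 * Re (ip_hom j (Ltilde (q1, q2)) (q1, q2)) + Re (ip_hom j (q1, q2) (q1, q2))
    = - 2 * real j * Re (ip_hom j (q1, q2) (q1, q2))
      - (cmod (Dn (j+1) q1 1 - Dn j q2 1))\<^sup>2 - (cmod (Dn (j+1) q1 (-1) + Dn j q2 (-1)))\<^sup>2"
proof -
  let ?u = "Dn (j+1) q1" and ?v = "Dn j q2" and ?m = "real (j+1)"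
  have "ip_hom j (Ltilde (q1, q2)) (q1, q2)
      = L2ip (\<lambda>y. - of_real y * Dn (j+2) q1 y - of_real ?m * ?u y + Dn (j+1) q2 y) ?u
        + L2ip (\<lambda>y. Dn (j+2) q1 y - of_real ?m * ?v y - of_real y * Dn (j+1) q2 y) ?v"
    unfolding ip_hom_def
    using Dn_fst_Ltilde[of "j+1" q1 q2 "j+1"] Dn_snd_Ltilde[of j q1 q2 j] q1 q2
    by (intro arg_cong2[where f = "(+)"] L2ip_cong) simp_all
  moreover have "ip_hom j (q1, q2) (q1, q2) = L2ip ?u ?u + L2ip ?v ?v"
    by (simp add: ip_hom_def)
  moreover have "2 * Re (L2ip (\<lambda>y. - of_real y * Dn (j+2) q1 y - of_real ?m * ?u y + Dn (j+1) q2 y) ?u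
        + L2ip (\<lambda>y. Dn (j+2) q1 y - of_real ?m * ?v y - of_real y * Dn (j+1) q2 y) ?v)
      + Re (L2ip ?u ?u + L2ip ?v ?v)
      = - 2 * (?m - 1) * Re (L2ip ?u ?u + L2ip ?v ?v)
        - (cmod (?u 1 - ?v 1))\<^sup>2 - (cmod (?u (-1) + ?v (-1)))\<^sup>2"
    using Cn_has_vector_derivative[OF q1, of "j+1"] Cn_has_vector_derivative[OF q2, of j]
      Cn_continuous_on[OF q1, of "j+2"] Cn_continuous_on[OF q2, of "j+1"]
    by (intro transport_energy_identity) (simp_all add: numeral_2_eq_2)
  ultimately show ?thesis
    by simp
qed

lemma Re_ip0_Ltilde_le:
  assumes q1: "Cn 2 q1" and q2: "Cn 1 q2"
  shows "2 * Re (ip0 (Ltilde (q1, q2)) (q1, q2)) + Re (ip0 (q1, q2) (q1, q2)) \<le> 0"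
proof -
  define a where "a = Dn 1 q1 1 - q2 1"
  define b where "b = Dn 1 q1 (-1) + q2 (-1)"
  define c where "c = q1 (-1)"
  have "2 * Re (ip_hom 0 (Ltilde (q1, q2)) (q1, q2)) + Re (ip_hom 0 (q1, q2) (q1, q2))
      = - (cmod a)\<^sup>2 - (cmod b)\<^sup>2"
    using Re_ip_hom_Ltilde[of 0 q1 q2] q1 q2 by (simp add: a_def b_def numeral_2_eq_2)
  moreover have "fst (Ltilde (q1, q2)) (-1) = b - c"
    by (simp add: Ltilde_def b_def c_def)
  ultimately have "2 * Re (ip0 (Ltilde (q1, q2)) (q1, q2)) + Re (ip0 (q1, q2) (q1, q2))
      = - (cmod a)\<^sup>2 - (cmod b)\<^sup>2 + 2 * Re ((b - c) * cnj c) + (cmod c)\<^sup>2"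
    by (simp add: ip0_eq_ip_hom c_def flip: complex_norm_square)
  also have "\<dots> = - (cmod a)\<^sup>2 - (cmod (b - c))\<^sup>2"
    by (simp add: cmod_power2 power2_diff algebra_simps) (simp add: power2_eq_square)
  also have "\<dots> \<le> 0"
    by simp
  finally show ?thesis .
qed

theorem mainTheorem7:
  fixes k :: nat and q1 q2 :: "real \<Rightarrow> complex"
  assumes "Cn (k+2) q1" and "Cn (k+1) q2"
  shows "Re (ipk k (Ltilde (q1, q2)) (q1, q2)) \<le> - (1/2) * normk_sq k (q1, q2)"
proof -
  have level0: "2 * Re (ip0 (Ltilde (q1, q2)) (q1, q2)) + Re (ip0 (q1, q2) (q1, q2)) \<le> 0"
    using assms by (intro Re_ip0_Ltilde_le) (auto elim: Cn_mono)
  show ?thesis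
  proof (cases "k = 0")
    case True
    with level0 show ?thesis
      by (simp add: ipk_def normk_sq_def)
  next
    case False
    have "0 \<le> real k * Re (ip_hom k (q1, q2) (q1, q2))"
      using assms by (intro mult_nonneg_nonneg Re_ip_hom_self_nonneg) (auto elim: Cn_mono)
    then have "2 * Re (ip_hom k (Ltilde (q1, q2)) (q1, q2)) + Re (ip_hom k (q1, q2) (q1, q2)) \<le> 0"
      unfolding Re_ip_hom_Ltilde[OF assms]
      using zero_le_power2[of "cmod (Dn (k+1) q1 1 - Dn k q2 1)"]
        zero_le_power2[of "cmod (Dn (k+1) q1 (-1) + Dn k q2 (-1))"]
      by linarith
    with level0 False show ?thesis
      by (simp add: ipk_eq_ip_hom normk_sq_def field_simps)
  qed
qed

end
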